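(* Let $A$ be a finite abelian group, $c:A\times A\to U(1)$ a bicharacter, and $\mathcal{B}=\mathrm{Vec}_A^{c}$ the associated pointed braided fusion category (trivial associator, braiding $c$). Let $O(A,c)=\{\sigma\in\mathrm{Aut}(A):c(a,b)=c(\sigma(a),\sigma(b))\ \forall a,b\in A\}\subseteq O(A,q)$, where $q(a)=c(a,a)$. Then every group homomorphism $\rho:G\to O(A,c)$ has trivial $H^3$-obstruction, i.e. $\rho$ lifts to a categorical action $\underline{G}\to\underline{\mathrm{Aut}^{br}_\otimes(\mathcal{B})}$.
   Context: $O(A,q)$ is the group of automorphisms of $A$ preserving $q$, identified with the group of equivalence classes of braided autoequivalences of $\mathcal{B}$. The $H^3$-obstruction of a homomorphism $\rho:G\to O(A,q)$ is the class in $H^3(G,\widehat{A})$ whose vanishing is equivalent to the existence of a monoidal functor $\underline{G}\to\underline{\mathrm{Aut}^{br}_\otimes(\mathcal{B})}$ (2-group of braided autoequivalences and tensor natural isomorphisms) inducing $\rho$ on isomorphism classes. *)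

theory Defs
  imports Complex_Main
begin

text \<open>Skeletal model of the 2-group of braided autoequivalences of Vec_A^c
(trivial associator, braiding c).  A is a finite abelian group (type class),
U(1) is the unit circle in the complex numbers.\<close>

definition U1valued :: "('x \<Rightarrow> complex) \<Rightarrow> bool" where
  "U1valued f \<longleftrightarrow> (\<forall>x. cmod (f x) = 1)"

definition bicharacter :: "('a::ab_group_add \<Rightarrow> 'a \<Rightarrow> complex) \<Rightarrow> bool" where
  "bicharacter c \<longleftrightarrow> (\<forall>a b. cmod (c a b) = 1) \<and>
     (\<forall>a b d. c (a + b) d = c a d * c b d) \<and>
     (\<forall>a b d. c a (b + d) = c a b * c a d)"

definition group_aut :: "('a::ab_group_add \<Rightarrow> 'a) \<Rightarrow> bool" where
  "group_aut \<sigma> \<longleftrightarrow> bij \<sigma> \<and> (\<forall>a b. \<sigma> (a + b) = \<sigma> a + \<sigma> b)"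

definition O_c :: "('a::ab_group_add \<Rightarrow> 'a \<Rightarrow> complex) \<Rightarrow> ('a \<Rightarrow> 'a) set" where
  "O_c c = {\<sigma>. group_aut \<sigma> \<and> (\<forall>a b. c a b = c (\<sigma> a) (\<sigma> b))}"

text \<open>A braided autoequivalence of Vec_A^c (skeletal form): a group automorphism
  sigma on simple objects together with tensor structure scalars
  psi a b : F(a) (x) F(b) -> F(a+b).  Monoidality = 2-cocycle condition (trivial
  associator), braidedness = compatibility with c.\<close>
definition braided_autoeq ::
  "('a::ab_group_add \<Rightarrow> 'a \<Rightarrow> complex) \<Rightarrow> ('a \<Rightarrow> 'a) \<Rightarrow> ('a \<Rightarrow> 'a \<Rightarrow> complex) \<Rightarrow> bool" where
  "braided_autoeq c \<sigma> \<psi> \<longleftrightarrow> group_aut \<sigma> \<and> (\<forall>a b. cmod (\<psi> a b) = 1) \<and>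
     (\<forall>a b d. \<psi> a b * \<psi> (a + b) d = \<psi> b d * \<psi> a (b + d)) \<and>
     (\<forall>a b. c a b * \<psi> a b = \<psi> b a * c (\<sigma> a) (\<sigma> b))"

text \<open>Tensor structure of the composite F o G where F = (sigma, psi), G = (tau, phi).\<close>
definition comp_tensor ::
  "('a \<Rightarrow> 'a \<Rightarrow> complex) \<Rightarrow> ('a \<Rightarrow> 'a) \<Rightarrow> ('a \<Rightarrow> 'a \<Rightarrow> complex) \<Rightarrow> ('a \<Rightarrow> 'a \<Rightarrow> complex)" where
  "comp_tensor \<psi> \<tau> \<phi> = (\<lambda>a b. \<psi> (\<tau> a) (\<tau> b) * \<phi> a b)"

definition tensor_nat_iso ::
  "('a::ab_group_add \<Rightarrow> 'a \<Rightarrow> complex) \<Rightarrow> ('a \<Rightarrow> 'a \<Rightarrow> complex) \<Rightarrow> ('a \<Rightarrow> complex) \<Rightarrow> bool" where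
  "tensor_nat_iso \<psi> \<psi>' \<eta> \<longleftrightarrow> U1valued \<eta> \<and>
     (\<forall>a b. \<eta> (a + b) * \<psi> a b = \<psi>' a b * \<eta> a * \<eta> b)"

text \<open>A monoidal functor from the discrete monoidal category of G (written additively,
  not necessarily commutative) to the 2-group of braided autoequivalences,
  sending g to an autoequivalence with underlying automorphism rho g.\<close>
definition lifts_to_categorical_action ::
  "('a::ab_group_add \<Rightarrow> 'a \<Rightarrow> complex) \<Rightarrow> ('g::group_add \<Rightarrow> 'a \<Rightarrow> 'a) \<Rightarrow> bool" where
  "lifts_to_categorical_action c \<rho> \<longleftrightarrow>
    (\<exists>\<psi> \<mu> \<epsilon>.
       (\<forall>g. braided_autoeq c (\<rho> g) (\<psi> g)) \<and>
       (\<forall>g h. tensor_nat_iso (comp_tensor (\<psi> g) (\<rho> h) (\<psi> h)) (\<psi> (g + h)) (\<mu> g h)) \<and>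
       tensor_nat_iso (\<lambda>a b. 1) (\<psi> 0) \<epsilon> \<and>
       (\<forall>g h k a. \<mu> (g + h) k a * \<mu> g h (\<rho> k a) = \<mu> g (h + k) a * \<mu> h k a) \<and>
       (\<forall>g a. \<mu> 0 g a * \<epsilon> (\<rho> g a) = 1) \<and>
       (\<forall>g a. \<mu> g 0 a * \<epsilon> a = 1))"

end

theory Submission
  imports Defs
begin

text \<open>An automorphism preserving c is already a braided autoequivalence with the trivial tensor
  structure, and these trivial structures compose strictly. So G acts strictly: all tensor
  structures, the composition isomorphisms \<mu> and the unit isomorphism \<epsilon> can be taken to be 1,
  and every coherence condition holds trivially.\<close>

lemma braided_autoeq_trivial_tensor_iff:
  "braided_autoeq c \<sigma> (\<lambda>a b. 1) \<longleftrightarrow> \<sigma> \<in> O_c c"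
  by (auto simp: braided_autoeq_def O_c_def)

lemma comp_tensor_trivial: "comp_tensor (\<lambda>a b. 1) \<tau> (\<lambda>a b. 1) = (\<lambda>a b. 1)"
  by (simp add: comp_tensor_def)

lemma tensor_nat_iso_id: "tensor_nat_iso \<psi> \<psi> (\<lambda>a. 1)"
  by (simp add: tensor_nat_iso_def U1valued_def)

lemma lifts_to_categorical_action_strict:
  assumes "\<forall>g. \<rho> g \<in> O_c c"
  shows "lifts_to_categorical_action c \<rho>"
  unfolding lifts_to_categorical_action_def
proof (intro exI conjI allI)
  fix g
  show "braided_autoeq c (\<rho> g) (\<lambda>a b. 1)"
    using assms braided_autoeq_trivial_tensor_iff by blast
next
  fix g h
  show "tensor_nat_iso (comp_tensor (\<lambda>a b. 1) (\<rho> h) (\<lambda>a b. 1)) (\<lambda>a b. 1) (\<lambda>a. 1)"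
    unfolding comp_tensor_trivial by (rule tensor_nat_iso_id)
qed (simp_all add: tensor_nat_iso_id)

theorem corollary1:
  fixes c :: "'a::{ab_group_add, finite} \<Rightarrow> 'a \<Rightarrow> complex"
    and \<rho> :: "'g::group_add \<Rightarrow> 'a \<Rightarrow> 'a"
  assumes "bicharacter c"
    and "\<forall>g. \<rho> g \<in> O_c c"
    and "\<forall>g h. \<rho> (g + h) = \<rho> g \<circ> \<rho> h"
  shows "lifts_to_categorical_action c \<rho>"
  using assms(2) by (rule lifts_to_categorical_action_strict)

end
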